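(* Consider a HyperLogLog sketch with $m$ registers after inserting $n$ distinct elements (model and convention in the context), and let $B=\log_2\frac{n}{m}$. Then for every $\Delta\in(0,B)$ and every $j\in[m]$: (i) $\Pr[M[j]<B-\Delta]<\exp(-2^\Delta)<2^{-\Delta}$, and (ii) $\Pr[M[j]>B+\Delta]<2^{-\Delta}$.
   Context: HyperLogLog model: each of $n$ distinct elements $y_i$ is assigned a register index $f(y_i)$ uniform in $[m]$ and a value $\rho_i$ with $\Pr[\rho_i=k]=2^{-k}$, $k=1,2,\dots$ (the position of the first one-bit of a uniformly random hash value), all independent; register $M[j]$ is the maximum of $\rho_i$ over elements with $f(y_i)=j$ (0 if none). Then $\Pr[M[j]\le k]=(1-\frac{1}{m2^k})^n$ for integers $k\ge0$. Convention for this statement: each register $M[j]$ is treated as a real-valued continuous random variable with distribution function $\Pr[M[j]\le t]=\Pr[M[j]<t]=(1-\frac{1}{m2^t})^n$ for real $t$, and $\Pr[M[j]>t]=1-(1-\frac{1}{m2^t})^n$. *)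

theory Defs
  imports "HOL-Probability.Probability"
begin

text \<open>Distribution function of a HyperLogLog register (continuous convention):
  Pr[M[j] \<le> t] = Pr[M[j] < t] = (1 - 1/(m 2^t))^n.\<close>
definition hll_cdf :: "nat \<Rightarrow> nat \<Rightarrow> real \<Rightarrow> real" where
  "hll_cdf m n t = (1 - 1 / (real m * 2 powr t)) ^ n"

end

theory Submission
  imports Defs
begin

text \<open>Let \<open>B = log 2 (n/m)\<close> and \<open>q = 1 / (m 2 powr t)\<close>, so that \<open>n q = 2 powr (B - t)\<close>.
  The lower tail \<open>(1 - q) ^ n\<close> is below \<open>exp (- n q)\<close>, which is \<open>exp (- 2 powr \<Delta>)\<close> at
  \<open>t = B - \<Delta>\<close>; the upper tail \<open>1 - (1 - q) ^ n\<close> is below the union bound \<open>n q\<close>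
  (Bernoulli's inequality), which is \<open>2 powr - \<Delta>\<close> at \<open>t = B + \<Delta>\<close>.\<close>

lemma Bernoulli_inequality_strict:
  fixes x :: real
  assumes "0 < x" "x < 1" "n \<ge> 2"
  shows "1 - real n * x < (1 - x) ^ n"
proof -
  obtain k where k: "n = Suc k" "k \<ge> 1" using assms(3) by (cases n) auto
  have "1 - real n * x < (1 - real k * x) * (1 - x)"
    using k assms by (simp add: algebra_simps)
  also have "\<dots> \<le> (1 - x) ^ k * (1 - x)"
    using Bernoulli_inequality[of "-x" k] assms by (intro mult_right_mono) auto
  also have "\<dots> = (1 - x) ^ n" using k by simp
  finally show ?thesis .
qed

lemma power_one_minus_less_exp:
  fixes x :: real
  assumes "x \<noteq> 0" "x \<le> 1" "n \<ge> 1"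
  shows "(1 - x) ^ n < exp (- (real n * x))"
proof -
  have "(1 - x) ^ n < exp (- x) ^ n"
    using exp_minus_greater assms by (intro power_strict_mono) auto
  then show ?thesis by (simp add: exp_of_nat_mult[symmetric])
qed

lemma exp_minus_less_inverse:
  fixes y :: real
  assumes "0 < y"
  shows "exp (- y) < inverse y"
  using exp_gt_self[of y] assms by (simp add: exp_minus inverse_less_iff_less)

lemma hll_cdf_less_exp:
  assumes "1 \<le> real m * 2 powr t" "n \<ge> 1"
  shows "hll_cdf m n t < exp (- (real n / (real m * 2 powr t)))"
proof -
  have "real m \<noteq> 0" using assms(1) by (cases "m = 0") auto
  then show ?thesis
    using power_one_minus_less_exp[of "1 / (real m * 2 powr t)" n] assms by (simp add: hll_cdf_def)
qed

lemma one_minus_hll_cdf_less: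
  assumes "1 < real m * 2 powr t" "n \<ge> 2"
  shows "1 - hll_cdf m n t < real n / (real m * 2 powr t)"
  using Bernoulli_inequality_strict[of "1 / (real m * 2 powr t)" n] assms
  by (simp add: hll_cdf_def)

lemma (in prob_space) prob_greater_eq_one_minus_prob_le:
  fixes X :: "'a \<Rightarrow> real"
  assumes "X \<in> borel_measurable M"
  shows "prob {x \<in> space M. t < X x} = 1 - prob {x \<in> space M. X x \<le> t}"
proof -
  have "{x \<in> space M. X x \<le> t} \<in> sets M" using assms by measurable
  moreover have "{x \<in> space M. t < X x} = space M - {x \<in> space M. X x \<le> t}" by auto
  ultimately show ?thesis by (simp add: prob_compl)
qed

lemma two_powr_deviation_bounds:
  assumes "m \<ge> 1" "0 < \<Delta>" "\<Delta> < log 2 (real n / real m)"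
  shows "1 < 2 powr \<Delta>" "2 powr \<Delta> \<le> real n" "n \<ge> 2"
    and "real m * 2 powr log 2 (real n / real m) = real n"
proof -
  have "0 < real n / real m"
    using assms by (cases "n = 0") (auto simp: log_def)
  then have "2 powr \<Delta> < real n / real m" using assms(3) by (simp add: less_log_iff)
  show gt1: "1 < 2 powr \<Delta>" using assms(2) by simp
  from \<open>2 powr \<Delta> < real n / real m\<close> have "real m * 2 powr \<Delta> < real n"
    using assms(1) by (simp add: field_simps)
  moreover have "2 powr \<Delta> \<le> real m * 2 powr \<Delta>" using assms(1) by (simp add: mult_le_cancel_right1)
  ultimately show "2 powr \<Delta> \<le> real n" by linarith
  with gt1 have "1 < real n" by linarith
  then show "n \<ge> 2" by simp
  then show "real m * 2 powr log 2 (real n / real m) = real n" using assms(1) by simp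
qed

lemma hll_cdf_lower_deviation:
  assumes "m \<ge> 1" "0 < \<Delta>" "\<Delta> < log 2 (real n / real m)"
  shows "hll_cdf m n (log 2 (real n / real m) - \<Delta>) < exp (- (2 powr \<Delta>))"
proof -
  note bounds = two_powr_deviation_bounds[OF assms]
  define t where "t = log 2 (real n / real m) - \<Delta>"
  have scale: "real m * 2 powr t = real n / 2 powr \<Delta>"
    using bounds(4) by (simp add: t_def powr_diff)
  have "1 \<le> real m * 2 powr t" using scale bounds(2) by simp
  moreover have "real n / (real m * 2 powr t) = 2 powr \<Delta>" using scale bounds(3) by simp
  ultimately show ?thesis using hll_cdf_less_exp[of m t n] bounds(3) by (simp add: t_def)
qed

lemma hll_cdf_upper_deviation:
  assumes "m \<ge> 1" "0 < \<Delta>" "\<Delta> < log 2 (real n / real m)"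
  shows "1 - hll_cdf m n (log 2 (real n / real m) + \<Delta>) < 2 powr (- \<Delta>)"
proof -
  note bounds = two_powr_deviation_bounds[OF assms]
  define t where "t = log 2 (real n / real m) + \<Delta>"
  have scale: "real m * 2 powr t = real n * 2 powr \<Delta>"
    using bounds(4) by (simp add: t_def powr_add)
  have "1 < real m * 2 powr t"
    unfolding scale using bounds(1,3) by (intro less_1_mult) auto
  moreover have "real n / (real m * 2 powr t) = 2 powr (- \<Delta>)"
    unfolding scale using bounds(3) by (simp add: powr_minus inverse_eq_divide)
  ultimately show ?thesis using one_minus_hll_cdf_less[of m t n] bounds(3) by (simp add: t_def)
qed

theorem lemma3p3:
  fixes P :: "'a measure" and Mreg :: "nat \<Rightarrow> 'a \<Rightarrow> real"
    and m n :: nat and \<Delta> :: real and j :: nat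
  assumes "prob_space P"
    and "m \<ge> 1"
    and meas: "\<And>i. i < m \<Longrightarrow> Mreg i \<in> borel_measurable P"
    and cdf_le: "\<And>i t. i < m \<Longrightarrow> t \<ge> 0 \<Longrightarrow>
               measure P {x \<in> space P. Mreg i x \<le> t} = hll_cdf m n t"
    and cdf_lt: "\<And>i t. i < m \<Longrightarrow> t \<ge> 0 \<Longrightarrow>
               measure P {x \<in> space P. Mreg i x < t} = hll_cdf m n t"
    and "0 < \<Delta>" and "\<Delta> < log 2 (real n / real m)"
    and "j < m"
  shows "measure P {x \<in> space P. Mreg j x < log 2 (real n / real m) - \<Delta>} < exp (- (2 powr \<Delta>))
         \<and> exp (- (2 powr \<Delta>)) < 2 powr (- \<Delta>)
         \<and> measure P {x \<in> space P. Mreg j x > log 2 (real n / real m) + \<Delta>} < 2 powr (- \<Delta>)"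
proof -
  interpret prob_space P by fact
  define B where "B = log 2 (real n / real m)"
  have "0 \<le> B - \<Delta>" using assms(7) by (simp add: B_def)
  then have lower: "measure P {x \<in> space P. Mreg j x < B - \<Delta>} < exp (- (2 powr \<Delta>))"
    using cdf_lt[OF assms(8)] hll_cdf_lower_deviation[OF assms(2,6,7)] by (simp add: B_def)
  have "0 \<le> B + \<Delta>" using assms(6,7) by (simp add: B_def)
  then have upper: "measure P {x \<in> space P. Mreg j x > B + \<Delta>} < 2 powr (- \<Delta>)"
    using prob_greater_eq_one_minus_prob_le[OF meas[OF assms(8)]] cdf_le[OF assms(8)]
      hll_cdf_upper_deviation[OF assms(2,6,7)] by (simp add: B_def)
  have "exp (- (2 powr \<Delta>)) < 2 powr (- \<Delta>)"
    using exp_minus_less_inverse[of "2 powr \<Delta>"] by (simp add: powr_minus)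
  with lower upper show ?thesis by (simp add: B_def)
qed

end
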